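(* Let $W_0(s)=\int_0^{\bar\theta}\frac{1-F(\theta)}{f(\theta)}s(\theta)\,dF(\theta)$. For nondecreasing $s,\hat s:\Theta\to[0,1]$ with $\hat s\in\mathrm{MPS}(s)$: (i) if $F$ satisfies IFR, then $W_0(\hat s)\ge W_0(s)$; (ii) $W_0(\hat s)\le W_0(s)$ holds for all such pairs $(s,\hat s)$ if and only if $F$ satisfies DFR.
   Context: Let $\bar\theta\in(0,\infty]$, $\Theta=[0,\bar\theta)$ (closed at $\bar\theta$ if finite), $F$ a cdf on $\Theta$ with continuous, strictly positive density $f$, $dF=f\,d\theta$, and finite mean. IFR means $\frac{1-F}{f}$ is nonincreasing on $\Theta$; DFR means it is nondecreasing on $[0,\bar\theta)$. For bounded measurable $a,b$ on $\Theta$, write $b\in\mathrm{MPS}(a)$ if $\int_x^{\bar\theta}b\,dF\le\int_x^{\bar\theta}a\,dF$ for all $x\in\Theta$, with equality at $x=0$. ($W_0(s)$ equals consumer surplus without exclusion up to a constant independent of $s$.) *)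

theory Defs
  imports "HOL-Analysis.Analysis"
begin

text \<open>Type space: \<open>Theta tb = [0, tb]\<close> if \<open>tb\<close> is finite, \<open>[0,\<infinity>)\<close> if \<open>tb = \<infinity>\<close>.\<close>
definition Theta :: "ereal \<Rightarrow> real set" where
  "Theta tb = {x. 0 \<le> x \<and> ereal x \<le> tb}"

definition ThetaO :: "ereal \<Rightarrow> real set" where
  "ThetaO tb = {x. 0 \<le> x \<and> ereal x < tb}"

definition IFR :: "ereal \<Rightarrow> (real \<Rightarrow> real) \<Rightarrow> (real \<Rightarrow> real) \<Rightarrow> bool" where
  "IFR tb F f \<longleftrightarrow> antimono_on (Theta tb) (\<lambda>x. (1 - F x) / f x)"

definition DFR :: "ereal \<Rightarrow> (real \<Rightarrow> real) \<Rightarrow> (real \<Rightarrow> real) \<Rightarrow> bool" where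
  "DFR tb F f \<longleftrightarrow> mono_on (ThetaO tb) (\<lambda>x. (1 - F x) / f x)"

text \<open>\<open>in_MPS tb f b a\<close>: for bounded measurable \<open>a, b\<close> on \<open>Theta\<close>, \<open>b \<in> MPS(a)\<close> w.r.t. \<open>dF = f d\<theta>\<close>.\<close>
definition in_MPS :: "ereal \<Rightarrow> (real \<Rightarrow> real) \<Rightarrow> (real \<Rightarrow> real) \<Rightarrow> (real \<Rightarrow> real) \<Rightarrow> bool" where
  "in_MPS tb f b a \<longleftrightarrow>
     set_borel_measurable lborel (Theta tb) a \<and> set_borel_measurable lborel (Theta tb) b \<and>
     bounded (a ` Theta tb) \<and> bounded (b ` Theta tb) \<and>
     (\<forall>x\<in>Theta tb.
        (LINT t:{t\<in>Theta tb. x \<le> t}|lborel. b t * f t)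
          \<le> (LINT t:{t\<in>Theta tb. x \<le> t}|lborel. a t * f t)) \<and>
     (LINT t:Theta tb|lborel. b t * f t) = (LINT t:Theta tb|lborel. a t * f t)"

definition W0 :: "ereal \<Rightarrow> (real \<Rightarrow> real) \<Rightarrow> (real \<Rightarrow> real) \<Rightarrow> (real \<Rightarrow> real) \<Rightarrow> real" where
  "W0 tb F f s = (LINT t:Theta tb|lborel. ((1 - F t) / f t) * s t * f t)"

definition admissible :: "ereal \<Rightarrow> (real \<Rightarrow> real) \<Rightarrow> bool" where
  "admissible tb s \<longleftrightarrow> mono_on (Theta tb) s \<and> (\<forall>x\<in>Theta tb. 0 \<le> s x \<and> s x \<le> 1)"

end

theory Submission
  imports Defs
begin

(*
  Write g = (1 - F) / f for the inverse hazard rate, so that W0 s = \<integral> (1 - F) s = \<integral> g s dF.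
  For h = s - sh, the layer-cake representation g = \<integral>_0^\<infinity> [c < g] dc and Fubini give
  W0 s - W0 sh = \<integral>_0^\<infinity> (\<integral>_{g > c} h dF) dc.
  The mean-preserving-spread condition says that \<integral> h dF is nonnegative over every upper tail
  and zero over the whole type space. Under DFR each superlevel set {g > c} is an upper tail up to
  a null set, so every inner integral is nonnegative; under IFR the complement of {g > c} is one,
  so every inner integral is nonpositive.
  Conversely, comparing a single step at m with its spread onto two steps at a < m < b shows that
  H m = \<integral>_m (1 - F) satisfies a chord inequality making -H convex as a function of F. The
  derivative of -H with respect to F is g, so the chord slopes force g to be nondecreasing.
*)

lemma tendsto_ratio_of_derivatives:
  fixes \<phi> \<psi> :: "real \<Rightarrow> real"
  assumes \<phi>: "(\<phi> has_real_derivative \<phi>') (at x within S)"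
    and \<psi>: "(\<psi> has_real_derivative \<psi>') (at x within S)" and "\<psi>' \<noteq> 0"
  shows "((\<lambda>m. (\<phi> m - \<phi> x) / (\<psi> m - \<psi> x)) \<longlongrightarrow> \<phi>' / \<psi>') (at x within S)"
proof (rule Lim_transform_eventually)
  show "((\<lambda>m. ((\<phi> m - \<phi> x) / (m - x)) / ((\<psi> m - \<psi> x) / (m - x))) \<longlongrightarrow> \<phi>' / \<psi>') (at x within S)"
    using \<phi> \<psi> \<open>\<psi>' \<noteq> 0\<close> unfolding has_field_derivative_iff by (rule tendsto_divide)
  show "\<forall>\<^sub>F m in at x within S.
          ((\<phi> m - \<phi> x) / (m - x)) / ((\<psi> m - \<psi> x) / (m - x)) = (\<phi> m - \<phi> x) / (\<psi> m - \<psi> x)"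
    by (auto simp: eventually_at_filter)
qed

lemma deriv_ratio_le_of_chord_ineq:
  fixes \<phi> \<psi> :: "real \<Rightarrow> real"
  assumes "x < y" and \<psi>_strict: "strict_mono_on {x..y} \<psi>"
    and chord: "\<And>m. x < m \<Longrightarrow> m < y \<Longrightarrow> (\<psi> y - \<psi> m) * (\<phi> m - \<phi> x) \<le> (\<psi> m - \<psi> x) * (\<phi> y - \<phi> m)"
    and \<phi>x: "(\<phi> has_real_derivative \<phi>x) (at x within {x..y})"
    and \<psi>x: "(\<psi> has_real_derivative \<psi>x) (at x within {x..y})" "\<psi>x \<noteq> 0"
    and \<phi>y: "(\<phi> has_real_derivative \<phi>y) (at y within {x..y})"
    and \<psi>y: "(\<psi> has_real_derivative \<psi>y) (at y within {x..y})" "\<psi>y \<noteq> 0"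
  shows "\<phi>x / \<psi>x \<le> \<phi>y / \<psi>y"
proof -
  (* The chord inequality gives slope[x,m] \<le> slope[x,y] \<le> slope[m,y]; as m tends to x, resp. y,
     the outer slopes tend to the derivative ratios. *)
  define r where "r = (\<phi> y - \<phi> x) / (\<psi> y - \<psi> x)"
  have r_swap: "(\<phi> x - \<phi> y) / (\<psi> x - \<psi> y) = r"
    by (metis minus_diff_eq minus_divide_divide r_def)
  have slopes: "(\<phi> m - \<phi> x) / (\<psi> m - \<psi> x) \<le> r \<and> r \<le> (\<phi> m - \<phi> y) / (\<psi> m - \<psi> y)"
    if "x < m" "m < y" for m
  proof -
    have "0 < \<psi> m - \<psi> x" "0 < \<psi> y - \<psi> m"
      using \<psi>_strict that by (auto simp: strict_mono_on_def)
    with chord[OF that] show ?thesis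
      by (simp add: r_def divide_simps) (simp add: algebra_simps)
  qed
  have "\<phi>x / \<psi>x \<le> r"
  proof (rule tendsto_upperbound[OF tendsto_ratio_of_derivatives[OF \<phi>x \<psi>x]])
    show "\<forall>\<^sub>F m in at x within {x..y}. (\<phi> m - \<phi> x) / (\<psi> m - \<psi> x) \<le> r"
      by (rule eventually_at_filter[THEN iffD2, OF always_eventually])
        (use slopes in \<open>force simp: r_def le_less\<close>)
    show "at x within {x..y} \<noteq> bot"
      using \<open>x < y\<close> by (simp add: at_within_Icc_at_right)
  qed
  moreover have "r \<le> \<phi>y / \<psi>y"
  proof (rule tendsto_lowerbound[OF tendsto_ratio_of_derivatives[OF \<phi>y \<psi>y]])
    show "\<forall>\<^sub>F m in at y within {x..y}. r \<le> (\<phi> m - \<phi> y) / (\<psi> m - \<psi> y)"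
      by (rule eventually_at_filter[THEN iffD2, OF always_eventually])
        (use slopes r_swap in \<open>force simp: le_less\<close>)
    show "at y within {x..y} \<noteq> bot"
      using \<open>x < y\<close> by (simp add: at_within_Icc_at_left)
  qed
  ultimately show ?thesis by linarith
qed

lemma has_real_derivative_indefinite_integral:
  fixes g \<Phi> :: "real \<Rightarrow> real"
  assumes "continuous_on {a..b} g"
    and \<Phi>: "\<And>u. u \<in> {a..b} \<Longrightarrow> \<Phi> u = c + (LINT t:{a..u}|lborel. g t)"
    and "x \<in> {a..b}"
  shows "(\<Phi> has_real_derivative g x) (at x within {a..b})"
proof (rule has_field_derivative_transform_within)
  have "((\<lambda>u. LBINT t=a..u. g t) has_real_derivative g x) (at x within {a..b})"
    using interval_integral_FTC2[of a a b g x] assms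
    by (auto simp: has_real_derivative_iff_has_vector_derivative)
  then show "((\<lambda>u. c + (LBINT t=a..u. g t)) has_real_derivative g x) (at x within {a..b})"
    using DERIV_add[OF DERIV_const[of c]] by simp
qed (use assms in \<open>auto simp: interval_integral_Icc intro: zero_less_one\<close>)

lemma set_integral_nonneg:
  fixes k :: "'a \<Rightarrow> real"
  shows "(\<And>x. x \<in> A \<Longrightarrow> 0 \<le> k x) \<Longrightarrow> 0 \<le> (LINT x:A|M. k x)"
  unfolding set_lebesgue_integral_def by (rule integral_nonneg_AE) (auto simp: indicator_def)

lemma set_integral_nonpos:
  fixes k :: "'a \<Rightarrow> real"
  shows "(\<And>x. x \<in> A \<Longrightarrow> k x \<le> 0) \<Longrightarrow> (LINT x:A|M. k x) \<le> 0"
  using set_integral_nonneg[of A "\<lambda>x. - k x" M]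
  by (simp add: set_lebesgue_integral_def)

lemma set_borel_measurable_mult:
  fixes a b :: "'a \<Rightarrow> real"
  assumes "set_borel_measurable M A a" "set_borel_measurable M A b"
  shows "set_borel_measurable M A (\<lambda>t. a t * b t)"
proof -
  have "(\<lambda>t. indicator A t *\<^sub>R (a t * b t)) = (\<lambda>t. (indicator A t *\<^sub>R a t) * (indicator A t *\<^sub>R b t))"
    by (auto simp: fun_eq_iff indicator_def)
  then show ?thesis
    using assms by (simp add: set_borel_measurable_def)
qed

lemma convex_comb_min_le:
  fixes \<alpha> c p q :: real
  assumes "0 \<le> \<alpha>" "\<alpha> \<le> 1"
  shows "\<alpha> * min c p + (1 - \<alpha>) * min c q \<le> min c (\<alpha> * p + (1 - \<alpha>) * q)"
proof -
  have "\<alpha> * min c p \<le> \<alpha> * c" "\<alpha> * min c p \<le> \<alpha> * p"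
    "(1 - \<alpha>) * min c q \<le> (1 - \<alpha>) * c" "(1 - \<alpha>) * min c q \<le> (1 - \<alpha>) * q"
    using assms by (simp_all add: mult_left_mono)
  then show ?thesis
    by (simp add: algebra_simps)
qed

lemma layer_cake_integral:
  fixes g k :: "'a \<Rightarrow> real"
  assumes "sigma_finite_measure M"
    and [measurable]: "g \<in> borel_measurable M" "k \<in> borel_measurable M"
    and g_nonneg: "\<And>t. 0 \<le> g t"
    and gk_int: "integrable M (\<lambda>t. g t * k t)"
  shows "set_integrable lborel {0..} (\<lambda>c. LINT t:{t. c < g t}|M. k t)"
    and "(\<integral>t. g t * k t \<partial>M) = (LINT c:{0..}|lborel. LINT t:{t. c < g t}|M. k t)"
proof -
  interpret pair_sigma_finite M lborel
    using assms(1) by (simp add: pair_sigma_finite_def lborel.sigma_finite_measure_axioms)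
  define \<Phi> where "\<Phi> t c = indicator {0..<g t} c * k t" for t c
  have layer_measure: "(\<integral>c. indicator {0..<g t} c * a \<partial>lborel) = g t * a" for t a
    using g_nonneg[of t] by (simp add: measure_def)
  have \<Phi>_t: "(\<integral>t. \<Phi> t c \<partial>M) = indicator {0..} c * (LINT t:{t. c < g t}|M. k t)" for c
    unfolding set_lebesgue_integral_def \<Phi>_def
    by (cases "0 \<le> c") (auto simp: indicator_def intro!: Bochner_Integration.integral_cong)
  have \<Phi>_c: "(\<integral>c. \<Phi> t c \<partial>lborel) = g t * k t" for t
    unfolding \<Phi>_def by (rule layer_measure)
  have \<Phi>_int: "integrable (M \<Otimes>\<^sub>M lborel) (case_prod \<Phi>)"
  proof (rule Fubini_integrable)
    show "case_prod \<Phi> \<in> borel_measurable (M \<Otimes>\<^sub>M lborel)"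
    proof -
      have "case_prod \<Phi> = (\<lambda>x. if 0 \<le> snd x \<and> snd x < g (fst x) then k (fst x) else 0)"
        by (auto simp: fun_eq_iff \<Phi>_def indicator_def)
      then show ?thesis by simp
    qed
    have "(\<lambda>t. \<integral>c. norm (\<Phi> t c) \<partial>lborel) = (\<lambda>t. norm (g t * k t))"
      using g_nonneg by (simp add: \<Phi>_def abs_mult layer_measure)
    then show "integrable M (\<lambda>t. \<integral>c. norm (case_prod \<Phi> (t, c)) \<partial>lborel)"
      using gk_int by simp
    show "AE t in M. integrable lborel (\<lambda>c. case_prod \<Phi> (t, c))"
      using g_nonneg
      by (auto simp: \<Phi>_def intro!: AE_I2 integrable_mult_left integrable_real_indicator)
  qed
  show "set_integrable lborel {0..} (\<lambda>c. LINT t:{t. c < g t}|M. k t)"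
    using integrable_snd[OF \<Phi>_int] by (simp add: \<Phi>_t set_integrable_def)
  show "(\<integral>t. g t * k t \<partial>M) = (LINT c:{0..}|lborel. LINT t:{t. c < g t}|M. k t)"
    using Fubini_integral[OF \<Phi>_int] by (simp add: \<Phi>_t \<Phi>_c set_lebesgue_integral_def)
qed

lemma Theta_iff: "t \<in> Theta tb \<longleftrightarrow> 0 \<le> t \<and> ereal t \<le> tb"
  by (simp add: Theta_def)

lemma ThetaO_subset_Theta: "ThetaO tb \<subseteq> Theta tb"
  by (auto simp: Theta_def ThetaO_def)

lemma Theta_minus_ThetaO: "t \<in> Theta tb \<Longrightarrow> t \<notin> ThetaO tb \<Longrightarrow> t = real_of_ereal tb"
  by (auto simp: Theta_def ThetaO_def)

lemma Icc_subset_Theta: "0 \<le> u \<Longrightarrow> v \<in> Theta tb \<Longrightarrow> {u..v} \<subseteq> Theta tb"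
  by (auto simp: Theta_def intro: order_trans[of _ "ereal v"])

lemma sets_Theta [measurable]: "Theta tb \<in> sets borel"
  unfolding Theta_def by measurable

lemma set_integral_Theta_split:
  fixes k :: "real \<Rightarrow> real"
  assumes "set_integrable lborel (Theta tb) k" "x \<in> Theta tb"
  shows "(LINT t:{t\<in>Theta tb. x < t}|lborel. k t)
           = (LINT t:Theta tb|lborel. k t) - (LINT t:{0..x}|lborel. k t)"
proof -
  have "{0..x} \<subseteq> Theta tb" using assms(2) Icc_subset_Theta by (auto simp: Theta_iff)
  then have "Theta tb = {0..x} \<union> {t\<in>Theta tb. x < t}"
    by (auto simp: Theta_iff)
  moreover have "(LINT t:{0..x} \<union> {t\<in>Theta tb. x < t}|lborel. k t)
      = (LINT t:{0..x}|lborel. k t) + (LINT t:{t\<in>Theta tb. x < t}|lborel. k t)"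
    using \<open>{0..x} \<subseteq> Theta tb\<close>
    by (intro set_integral_Un set_integrable_subset[OF assms(1)]) auto
  ultimately show ?thesis by simp
qed

lemma set_integral_tail_closed:
  fixes k :: "real \<Rightarrow> real"
  shows "(LINT t:{t\<in>A. x \<le> t}|lborel. k t) = (LINT t:{t\<in>A. x < t}|lborel. k t)"
  by (rule set_integral_discrete_difference[where X="{x}"]) auto

lemma set_integral_upset_nonneg:
  fixes k :: "real \<Rightarrow> real"
  assumes tails: "\<And>x. x \<in> Theta tb \<Longrightarrow> 0 \<le> (LINT t:{t\<in>Theta tb. x \<le> t}|lborel. k t)"
    and V: "V \<subseteq> Theta tb"
    and up: "\<And>t u. t \<in> V \<Longrightarrow> u \<in> ThetaO tb \<Longrightarrow> t \<le> u \<Longrightarrow> u \<in> V"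
  shows "0 \<le> (LINT t:V|lborel. k t)"
proof (cases "V = {}")
  case False
  define x where "x = Inf V"
  have bdd: "bdd_below V"
    using V unfolding bdd_below_def Theta_def by blast
  obtain v where "v \<in> V" using False by auto
  have "0 \<le> x"
    unfolding x_def using False V by (intro cInf_greatest) (auto simp: Theta_iff)
  moreover have "x \<le> v"
    unfolding x_def using \<open>v \<in> V\<close> bdd by (rule cInf_lower)
  ultimately have "x \<in> Theta tb"
    using Icc_subset_Theta[of x v tb] V \<open>v \<in> V\<close> by fastforce
  (* V is the upper tail above x = Inf V, except possibly for the points x and tb. *)
  have "(LINT t:{t\<in>Theta tb. x \<le> t}|lborel. k t) = (LINT t:V|lborel. k t)"
  proof (rule set_integral_discrete_difference[where X="{x, real_of_ereal tb}"])
    show "{t\<in>Theta tb. x \<le> t} - V \<union> (V - {t\<in>Theta tb. x \<le> t}) \<subseteq> {x, real_of_ereal tb}"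
    proof safe
      fix t assume t: "t \<in> Theta tb" "x \<le> t" "t \<notin> V" "t \<noteq> x"
      then have "x < t" by simp
      then obtain w where "w \<in> V" "w < t"
        using cInf_less_iff[OF False bdd, of t] unfolding x_def by blast
      with t up have "t \<notin> ThetaO tb" by auto
      with t(1) show "t = real_of_ereal tb" by (rule Theta_minus_ThetaO)
    qed (use V bdd in \<open>auto simp: x_def intro: cInf_lower\<close>)
  qed auto
  with tails[OF \<open>x \<in> Theta tb\<close>] show ?thesis by simp
qed (simp add: set_lebesgue_integral_def)

locale type_distribution =
  fixes tb :: ereal and F f :: "real \<Rightarrow> real"
  assumes tb_pos: "0 < tb"
    and f_cont: "continuous_on (Theta tb) f"
    and f_pos: "\<forall>x\<in>Theta tb. 0 < f x"
    and f_int: "set_integrable lborel (Theta tb) f"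
    and f_total: "(LINT t:Theta tb|lborel. f t) = 1"
    and F_def: "\<forall>x\<in>Theta tb. F x = (LINT t:{0..x}|lborel. f t)"
    and finite_mean: "set_integrable lborel (Theta tb) (\<lambda>t. t * f t)"
begin

abbreviation \<Theta> :: "real set" where "\<Theta> \<equiv> Theta tb"

lemma zero_in_Theta: "0 \<in> \<Theta>"
  using tb_pos by (simp add: Theta_iff zero_ereal_def)

lemma f_nonneg: "t \<in> \<Theta> \<Longrightarrow> 0 \<le> f t"
  using f_pos by (simp add: less_imp_le)

lemma f_measurable [measurable]: "(\<lambda>t. indicator \<Theta> t * f t) \<in> borel_measurable borel"
  using borel_measurable_continuous_on_indicator[OF sets_Theta f_cont] by simp

lemma set_integrable_bounded_mult_f:
  assumes "set_borel_measurable lborel \<Theta> s" "bounded (s ` \<Theta>)" "A \<in> sets borel" "A \<subseteq> \<Theta>"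
  shows "set_integrable lborel A (\<lambda>t. s t * f t)"
proof -
  obtain B where "0 < B" and B: "\<And>t. t \<in> \<Theta> \<Longrightarrow> \<bar>s t\<bar> \<le> B"
    using assms(2) by (auto simp: bounded_pos)
  have "set_integrable lborel \<Theta> (\<lambda>t. s t * f t)"
  proof (rule set_integrable_bound[OF set_integrable_mult_right[OF f_int, of B]])
    show "set_borel_measurable lborel \<Theta> (\<lambda>t. s t * f t)"
      using assms(1) f_measurable by (intro set_borel_measurable_mult) (simp_all add: set_borel_measurable_def)
    show "AE t in lborel. t \<in> \<Theta> \<longrightarrow> norm (s t * f t) \<le> norm (B * f t)"
      using B f_nonneg \<open>0 < B\<close> by (auto simp: abs_mult intro!: mult_right_mono)
  qed
  then show ?thesis
    by (rule set_integrable_subset) (use assms in auto)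
qed

lemma tail_f_integral: "x \<in> \<Theta> \<Longrightarrow> (LINT t:{t\<in>\<Theta>. x < t}|lborel. f t) = 1 - F x"
  using set_integral_Theta_split[OF f_int] f_total F_def by simp

lemma closed_tail_f_integral: "x \<in> \<Theta> \<Longrightarrow> (LINT t:{t\<in>\<Theta>. x \<le> t}|lborel. f t) = 1 - F x"
  by (simp add: set_integral_tail_closed tail_f_integral)

lemma survival_nonneg: "x \<in> \<Theta> \<Longrightarrow> 0 \<le> 1 - F x"
  unfolding tail_f_integral[symmetric] set_lebesgue_integral_def
  by (rule integral_nonneg_AE) (auto simp: indicator_def f_nonneg)

lemma F_eq_1_at_right_endpoint:
  assumes "t \<in> \<Theta>" "t \<notin> ThetaO tb"
  shows "F t = 1"
proof -
  have "ereal t = tb"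
    using assms by (auto simp: Theta_def ThetaO_def)
  then have "{u\<in>\<Theta>. t < u} = {}"
    by (auto simp: Theta_iff)
  then show ?thesis
    using tail_f_integral[OF assms(1)] by (simp add: set_lebesgue_integral_def)
qed

lemma F_has_real_derivative:
  assumes "0 \<le> a" "b \<in> \<Theta>" "x \<in> {a..b}"
  shows "(F has_real_derivative f x) (at x within {a..b})"
proof -
  have "{0..b} \<subseteq> \<Theta>"
    using assms(2) by (rule Icc_subset_Theta[OF order_refl])
  then have "(F has_real_derivative f x) (at x within {0..b})"
    using assms F_def
    by (intro has_real_derivative_indefinite_integral[where c=0] continuous_on_subset[OF f_cont])
      auto
  then show ?thesis
    by (rule has_field_derivative_subset) (use assms in auto)
qed

lemma F_continuous_on: "0 \<le> a \<Longrightarrow> b \<in> \<Theta> \<Longrightarrow> continuous_on {a..b} F"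
  by (rule DERIV_continuous_on[OF F_has_real_derivative])

lemma F_strict_mono:
  assumes "u \<in> \<Theta>" "v \<in> \<Theta>" "u < v"
  shows "F u < F v"
proof (rule DERIV_pos_imp_increasing_open[OF \<open>u < v\<close>])
  have "0 \<le> u" using assms(1) by (simp add: Theta_iff)
  then show "continuous_on {u..v} F"
    using assms(2) by (rule F_continuous_on)
  fix x assume x: "u < x" "x < v"
  then have "x \<in> \<Theta>"
    using Icc_subset_Theta[OF \<open>0 \<le> u\<close> assms(2)] by auto
  moreover have "(F has_real_derivative f x) (at x)"
    using F_has_real_derivative[OF \<open>0 \<le> u\<close> assms(2), of x] x by (simp add: at_within_Icc_at)
  ultimately show "\<exists>y. (F has_real_derivative y) (at x) \<and> 0 < y"
    using f_pos by blast
qed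

lemma F_mono: "u \<in> \<Theta> \<Longrightarrow> v \<in> \<Theta> \<Longrightarrow> u \<le> v \<Longrightarrow> F u \<le> F v"
  using F_strict_mono by (cases "u = v") (auto intro: less_imp_le)

(* Extended by 0 outside \<Theta>, so that its superlevel sets at levels c \<ge> 0 lie in \<Theta>. *)
definition inv_hazard :: "real \<Rightarrow> real" where
  "inv_hazard t = (if t \<in> \<Theta> then (1 - F t) / f t else 0)"

lemma inv_hazard_measurable [measurable]: "inv_hazard \<in> borel_measurable borel"
proof -
  have "F \<in> borel_measurable (restrict_space borel \<Theta>)"
    by (rule borel_measurable_mono_on_fnc) (auto intro: mono_onI F_mono)
  moreover have "f \<in> borel_measurable (restrict_space borel \<Theta>)"
    by (rule borel_measurable_continuous_on_restrict[OF f_cont])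
  ultimately have "(\<lambda>t. (1 - F t) / f t) \<in> borel_measurable (restrict_space borel \<Theta>)"
    by measurable
  then show ?thesis
    unfolding inv_hazard_def by (subst measurable_If_restrict_space_iff) auto
qed

lemma inv_hazard_nonneg: "0 \<le> inv_hazard t"
  using survival_nonneg f_pos by (simp add: inv_hazard_def less_imp_le)

lemma survival_integrable: "set_integrable lborel \<Theta> (\<lambda>t. 1 - F t)"
proof -
  (* \<integral> (1 - F) is the mean: the layer-cake formula for g t = t. *)
  let ?g = "\<lambda>t. indicator \<Theta> t * t" and ?k = "\<lambda>t. indicator \<Theta> t * f t"
  have layers: "set_integrable lborel {0..} (\<lambda>c. LINT t:{t. c < ?g t}|lborel. ?k t)"
  proof (rule layer_cake_integral)
    have "(\<lambda>t. ?g t * ?k t) = (\<lambda>t. indicator \<Theta> t *\<^sub>R (t * f t))"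
      by (auto simp: fun_eq_iff indicator_def)
    then show "integrable lborel (\<lambda>t. ?g t * ?k t)"
      using finite_mean by (simp add: set_integrable_def)
    show "0 \<le> ?g t" for t
      by (simp add: indicator_def Theta_iff)
  qed (simp_all add: lborel.sigma_finite_measure_axioms)
  have layer_eq: "(LINT t:{t. c < ?g t}|lborel. ?k t) = indicator \<Theta> c * (1 - F c)"
    if "c \<in> {0..}" for c
  proof -
    have "{t. c < ?g t} = {t\<in>\<Theta>. c < t}"
      using that by (auto simp: indicator_def)
    then have "(LINT t:{t. c < ?g t}|lborel. ?k t) = (LINT t:{t\<in>\<Theta>. c < t}|lborel. f t)"
      by (simp add: set_lebesgue_integral_cong)
    moreover have "{t\<in>\<Theta>. c < t} = {}" if "c \<notin> \<Theta>"
      using \<open>c \<in> {0..}\<close> Icc_subset_Theta[of c _ tb] that by force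
    ultimately show ?thesis
      using tail_f_integral[of c] by (cases "c \<in> \<Theta>") (simp_all add: set_lebesgue_integral_def)
  qed
  have "set_integrable lborel {0..} (\<lambda>c. indicator \<Theta> c * (1 - F c))"
    using layers by (subst set_integrable_cong[OF refl refl]) (auto simp: layer_eq)
  then have "set_integrable lborel \<Theta> (\<lambda>c. indicator \<Theta> c * (1 - F c))"
    by (rule set_integrable_subset) (auto simp: Theta_iff)
  then show ?thesis
    by (subst set_integrable_cong[OF refl refl, where f'="\<lambda>c. indicator \<Theta> c * (1 - F c)"]) auto
qed

section \<open>Sufficiency of IFR and DFR\<close>

lemma W0_eq: "W0 tb F f s = (LINT t:\<Theta>|lborel. (1 - F t) * s t)"
  unfolding W0_def by (rule set_lebesgue_integral_cong) (use f_pos in auto)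

lemma set_integrable_survival_mult:
  assumes "set_borel_measurable lborel \<Theta> h" "bounded (h ` \<Theta>)"
  shows "set_integrable lborel \<Theta> (\<lambda>t. (1 - F t) * h t)"
proof -
  obtain B where "0 < B" and B: "\<And>t. t \<in> \<Theta> \<Longrightarrow> \<bar>h t\<bar> \<le> B"
    using assms(2) by (auto simp: bounded_pos)
  show ?thesis
  proof (rule set_integrable_bound[OF set_integrable_mult_left[OF survival_integrable, of B]])
    have "set_borel_measurable lborel \<Theta> (\<lambda>t. 1 - F t)"
      using survival_integrable by (simp add: set_integrable_def set_borel_measurable_def)
    then show "set_borel_measurable lborel \<Theta> (\<lambda>t. (1 - F t) * h t)"
      using assms(1) by (rule set_borel_measurable_mult)
    show "AE t in lborel. t \<in> \<Theta> \<longrightarrow> norm ((1 - F t) * h t) \<le> norm ((1 - F t) * B)"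
      using B survival_nonneg \<open>0 < B\<close> by (auto simp: abs_mult intro!: mult_left_mono)
  qed
qed

lemma W0_diff:
  assumes "set_borel_measurable lborel \<Theta> s" "bounded (s ` \<Theta>)"
    and "set_borel_measurable lborel \<Theta> sh" "bounded (sh ` \<Theta>)"
  shows "W0 tb F f s - W0 tb F f sh = (LINT t:\<Theta>|lborel. (1 - F t) * (s t - sh t))"
  using set_integrable_survival_mult[OF assms(1,2)] set_integrable_survival_mult[OF assms(3,4)]
  by (simp add: W0_eq right_diff_distrib)

lemma survival_integral_layer_cake:
  assumes "set_borel_measurable lborel \<Theta> h" "bounded (h ` \<Theta>)"
  shows "(LINT t:\<Theta>|lborel. (1 - F t) * h t)
           = (LINT c:{0..}|lborel. LINT t:{t. c < inv_hazard t}|lborel. h t * f t)"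
proof -
  let ?k = "\<lambda>t. indicator \<Theta> t * (h t * f t)"
  have gk: "inv_hazard t * ?k t = indicator \<Theta> t * ((1 - F t) * h t)" for t
    using f_pos by (auto simp: inv_hazard_def indicator_def)
  have "(LINT t:\<Theta>|lborel. (1 - F t) * h t) = (\<integral>t. inv_hazard t * ?k t \<partial>lborel)"
    by (simp add: gk set_lebesgue_integral_def)
  also have "\<dots> = (LINT c:{0..}|lborel. LINT t:{t. c < inv_hazard t}|lborel. ?k t)"
  proof (rule layer_cake_integral(2))
    have "set_borel_measurable lborel \<Theta> (\<lambda>t. h t * f t)"
      using assms(1) f_measurable by (intro set_borel_measurable_mult) (simp_all add: set_borel_measurable_def)
    then show "?k \<in> borel_measurable lborel"
      by (simp add: set_borel_measurable_def)
    show "integrable lborel (\<lambda>t. inv_hazard t * ?k t)"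
      using set_integrable_survival_mult[OF assms] by (simp add: gk set_integrable_def)
  qed (simp_all add: lborel.sigma_finite_measure_axioms inv_hazard_nonneg)
  also have "\<dots> = (LINT c:{0..}|lborel. LINT t:{t. c < inv_hazard t}|lborel. h t * f t)"
  proof (rule set_lebesgue_integral_cong, simp, intro allI impI)
    fix c :: real assume "c \<in> {0..}"
    have "{t. c < inv_hazard t} \<in> sets lborel"
      by measurable
    then show "(LINT t:{t. c < inv_hazard t}|lborel. ?k t) = (LINT t:{t. c < inv_hazard t}|lborel. h t * f t)"
      by (rule set_lebesgue_integral_cong) (use \<open>c \<in> {0..}\<close> in \<open>auto simp: inv_hazard_def split: if_splits\<close>)
  qed
  finally show ?thesis .
qed

lemma in_MPS_difference:
  assumes "in_MPS tb f sh s"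
  shows "set_borel_measurable lborel \<Theta> (\<lambda>t. s t - sh t)" "bounded ((\<lambda>t. s t - sh t) ` \<Theta>)"
    and "set_integrable lborel \<Theta> (\<lambda>t. (s t - sh t) * f t)"
    and "\<And>x. x \<in> \<Theta> \<Longrightarrow> 0 \<le> (LINT t:{t\<in>\<Theta>. x \<le> t}|lborel. (s t - sh t) * f t)"
    and "(LINT t:\<Theta>|lborel. (s t - sh t) * f t) = 0"
proof -
  have meas: "set_borel_measurable lborel \<Theta> s" "set_borel_measurable lborel \<Theta> sh"
    and bdd: "bounded (s ` \<Theta>)" "bounded (sh ` \<Theta>)"
    using assms by (auto simp: in_MPS_def)
  moreover have "(\<lambda>t. indicator \<Theta> t * (s t - sh t)) = (\<lambda>t. indicator \<Theta> t * s t - indicator \<Theta> t * sh t)"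
    by (simp add: fun_eq_iff right_diff_distrib)
  ultimately show "set_borel_measurable lborel \<Theta> (\<lambda>t. s t - sh t)"
    by (simp add: set_borel_measurable_def)
  obtain B B' where "\<And>t. t \<in> \<Theta> \<Longrightarrow> \<bar>s t\<bar> \<le> B" "\<And>t. t \<in> \<Theta> \<Longrightarrow> \<bar>sh t\<bar> \<le> B'"
    using bdd by (auto simp: bounded_iff)
  then show "bounded ((\<lambda>t. s t - sh t) ` \<Theta>)"
    by (auto simp: bounded_iff intro!: exI[of _ "B + B'"] abs_triangle_ineq4[THEN order_trans] add_mono)
  have int: "set_integrable lborel A (\<lambda>t. s t * f t)" "set_integrable lborel A (\<lambda>t. sh t * f t)"
    if "A \<in> sets borel" "A \<subseteq> \<Theta>" for A
    using meas bdd that by (auto intro: set_integrable_bounded_mult_f)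
  have diff: "(LINT t:A|lborel. (s t - sh t) * f t) = (LINT t:A|lborel. s t * f t) - (LINT t:A|lborel. sh t * f t)"
    if "A \<in> sets borel" "A \<subseteq> \<Theta>" for A
    using int[OF that] by (simp add: left_diff_distrib)
  show "set_integrable lborel \<Theta> (\<lambda>t. (s t - sh t) * f t)"
    using int[of \<Theta>] by (simp add: left_diff_distrib)
  show "0 \<le> (LINT t:{t\<in>\<Theta>. x \<le> t}|lborel. (s t - sh t) * f t)" if "x \<in> \<Theta>" for x
    using assms that by (simp add: diff in_MPS_def)
  show "(LINT t:\<Theta>|lborel. (s t - sh t) * f t) = 0"
    using assms by (simp add: diff in_MPS_def)
qed

lemma superlevel_integral_nonneg_of_DFR:
  fixes k :: "real \<Rightarrow> real"
  assumes "DFR tb F f" and "0 \<le> c"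
    and tails: "\<And>x. x \<in> \<Theta> \<Longrightarrow> 0 \<le> (LINT t:{t\<in>\<Theta>. x \<le> t}|lborel. k t)"
  shows "0 \<le> (LINT t:{t. c < inv_hazard t}|lborel. k t)"
proof (rule set_integral_upset_nonneg[OF tails])
  show "{t. c < inv_hazard t} \<subseteq> \<Theta>"
    using \<open>0 \<le> c\<close> by (auto simp: inv_hazard_def split: if_splits)
  fix t u assume t: "t \<in> {t. c < inv_hazard t}" and u: "u \<in> ThetaO tb" "t \<le> u"
  then have "t \<in> \<Theta>"
    using \<open>0 \<le> c\<close> by (auto simp: inv_hazard_def split: if_splits)
  have "t \<in> ThetaO tb"
  proof (rule ccontr)
    assume "t \<notin> ThetaO tb"
    with \<open>t \<in> \<Theta>\<close> have "inv_hazard t = 0"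
      by (simp add: inv_hazard_def F_eq_1_at_right_endpoint)
    with t \<open>0 \<le> c\<close> show False by simp
  qed
  then have "(1 - F t) / f t \<le> (1 - F u) / f u"
    using mono_onD[OF \<open>DFR tb F f\<close>[unfolded DFR_def]] u by blast
  with t u \<open>t \<in> \<Theta>\<close> show "u \<in> {t. c < inv_hazard t}"
    using ThetaO_subset_Theta by (auto simp: inv_hazard_def)
qed

lemma superlevel_integral_nonpos_of_IFR:
  fixes k :: "real \<Rightarrow> real"
  assumes "IFR tb F f" and "0 \<le> c" and k_int: "set_integrable lborel \<Theta> k"
    and tails: "\<And>x. x \<in> \<Theta> \<Longrightarrow> 0 \<le> (LINT t:{t\<in>\<Theta>. x \<le> t}|lborel. k t)"
    and total: "(LINT t:\<Theta>|lborel. k t) = 0"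
  shows "(LINT t:{t. c < inv_hazard t}|lborel. k t) \<le> 0"
proof -
  define U where "U = {t. c < inv_hazard t}"
  have "U \<subseteq> \<Theta>"
    using \<open>0 \<le> c\<close> by (auto simp: U_def inv_hazard_def split: if_splits)
  have "0 \<le> (LINT t:\<Theta> - U|lborel. k t)"
  proof (rule set_integral_upset_nonneg[OF tails])
    fix t u assume t: "t \<in> \<Theta> - U" and u: "u \<in> ThetaO tb" "t \<le> u"
    then have "u \<in> \<Theta>"
      using ThetaO_subset_Theta by auto
    with t u \<open>IFR tb F f\<close> have "(1 - F u) / f u \<le> (1 - F t) / f t"
      unfolding IFR_def monotone_on_def by blast
    with t \<open>u \<in> \<Theta>\<close> show "u \<in> \<Theta> - U"
      by (auto simp: U_def inv_hazard_def)
  qed auto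
  moreover have "(LINT t:U \<union> (\<Theta> - U)|lborel. k t) = (LINT t:U|lborel. k t) + (LINT t:\<Theta> - U|lborel. k t)"
    using \<open>U \<subseteq> \<Theta>\<close> by (intro set_integral_Un set_integrable_subset[OF k_int]) (auto simp: U_def)
  moreover have "U \<union> (\<Theta> - U) = \<Theta>"
    using \<open>U \<subseteq> \<Theta>\<close> by auto
  ultimately show ?thesis
    using total by (simp add: U_def)
qed

lemma W0_diff_layer_cake:
  assumes "in_MPS tb f sh s"
  shows "W0 tb F f s - W0 tb F f sh
           = (LINT c:{0..}|lborel. LINT t:{t. c < inv_hazard t}|lborel. (s t - sh t) * f t)"
  using assms unfolding in_MPS_def
  by (simp add: W0_diff survival_integral_layer_cake[OF in_MPS_difference(1,2)[OF assms]])

lemma W0_le_W0_of_IFR: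
  assumes "IFR tb F f" "in_MPS tb f sh s"
  shows "W0 tb F f s \<le> W0 tb F f sh"
proof -
  note h = in_MPS_difference[OF assms(2)]
  have "(LINT c:{0..}|lborel. LINT t:{t. c < inv_hazard t}|lborel. (s t - sh t) * f t) \<le> 0"
    by (rule set_integral_nonpos) (use superlevel_integral_nonpos_of_IFR[OF assms(1) _ h(3-5)] in auto)
  then show ?thesis
    using W0_diff_layer_cake[OF assms(2)] by simp
qed

lemma W0_le_W0_of_DFR:
  assumes "DFR tb F f" "in_MPS tb f sh s"
  shows "W0 tb F f sh \<le> W0 tb F f s"
proof -
  note h = in_MPS_difference[OF assms(2)]
  have "0 \<le> (LINT c:{0..}|lborel. LINT t:{t. c < inv_hazard t}|lborel. (s t - sh t) * f t)"
    by (rule set_integral_nonneg) (use superlevel_integral_nonneg_of_DFR[OF assms(1) _ h(4)] in auto)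
  then show ?thesis
    using W0_diff_layer_cake[OF assms(2)] by simp
qed

section \<open>Necessity of DFR\<close>

definition integrated_survival :: "real \<Rightarrow> real" where
  "integrated_survival m = (LINT t:{t\<in>\<Theta>. m \<le> t}|lborel. 1 - F t)"

lemma integrated_survival_has_real_derivative:
  assumes "0 \<le> a" "b \<in> \<Theta>" "x \<in> {a..b}"
  shows "((\<lambda>u. - integrated_survival u) has_real_derivative 1 - F x) (at x within {a..b})"
proof -
  have "{0..b} \<subseteq> \<Theta>"
    using assms(2) by (rule Icc_subset_Theta[OF order_refl])
  have "((\<lambda>u. - integrated_survival u) has_real_derivative 1 - F x) (at x within {0..b})"
  proof (rule has_real_derivative_indefinite_integral)
    show "continuous_on {0..b} (\<lambda>t. 1 - F t)"
      using F_continuous_on[OF order_refl assms(2)] by (intro continuous_intros)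
    show "- integrated_survival u
            = - (LINT t:\<Theta>|lborel. 1 - F t) + (LINT t:{0..u}|lborel. 1 - F t)" if "u \<in> {0..b}" for u
      using set_integral_Theta_split[OF survival_integrable, of u] \<open>{0..b} \<subseteq> \<Theta>\<close> that
      by (auto simp: integrated_survival_def set_integral_tail_closed)
  qed (use assms in auto)
  then show ?thesis
    by (rule has_field_derivative_subset) (use assms in auto)
qed

definition two_step :: "real \<Rightarrow> real \<Rightarrow> real \<Rightarrow> real \<Rightarrow> real" where
  "two_step \<alpha> a b t = \<alpha> * indicator {a..} t + (1 - \<alpha>) * indicator {b..} t"

lemma step_function_properties:
  assumes "0 \<le> \<alpha>" "\<alpha> \<le> 1"
  shows "admissible tb (two_step \<alpha> a b)" "admissible tb (indicator {a..})"
    and "set_borel_measurable lborel \<Theta> (two_step \<alpha> a b)" "bounded (two_step \<alpha> a b ` \<Theta>)"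
    and "set_borel_measurable lborel \<Theta> (indicator {a..})" "bounded ((indicator {a..} :: real \<Rightarrow> real) ` \<Theta>)"
  using assms
  by (auto simp: admissible_def two_step_def indicator_def set_borel_measurable_def bounded_iff
      intro!: mono_onI exI[of _ 1])

lemma survival_max: "x \<in> \<Theta> \<Longrightarrow> y \<in> \<Theta> \<Longrightarrow> 1 - F (max x y) = min (1 - F x) (1 - F y)"
  using F_mono[of x y] F_mono[of y x] by (cases "x \<le> y") (simp_all add: max_def min_def)

lemma tail_integral_step:
  assumes "x \<in> \<Theta>" "a \<in> \<Theta>"
  shows "(LINT t:{t\<in>\<Theta>. x \<le> t}|lborel. indicator {a..} t * f t) = 1 - F (max x a)"
proof -
  have "(LINT t:{t\<in>\<Theta>. x \<le> t}|lborel. indicator {a..} t * f t) = (LINT t:{t\<in>\<Theta>. max x a \<le> t}|lborel. f t)"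
    unfolding set_lebesgue_integral_def
    by (rule Bochner_Integration.integral_cong) (auto simp: indicator_def)
  also have "\<dots> = 1 - F (max x a)"
    using assms by (intro closed_tail_f_integral) (simp add: max_def)
  finally show ?thesis .
qed

lemma tail_integral_two_step:
  assumes "x \<in> \<Theta>" "a \<in> \<Theta>" "b \<in> \<Theta>"
  shows "(LINT t:{t\<in>\<Theta>. x \<le> t}|lborel. two_step \<alpha> a b t * f t)
           = \<alpha> * (1 - F (max x a)) + (1 - \<alpha>) * (1 - F (max x b))"
proof -
  let ?A = "{t\<in>\<Theta>. x \<le> t}" and ?I = "\<lambda>c t. indicator {c..} t * f t"
  have int: "set_integrable lborel ?A (?I c)" for c :: real
    using step_function_properties(5,6)[of 0] by (intro set_integrable_bounded_mult_f) auto
  have "(LINT t:?A|lborel. two_step \<alpha> a b t * f t) = (LINT t:?A|lborel. \<alpha> * ?I a t + (1 - \<alpha>) * ?I b t)"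
    by (rule set_lebesgue_integral_cong) (auto simp: two_step_def algebra_simps)
  also have "\<dots> = \<alpha> * (LINT t:?A|lborel. ?I a t) + (1 - \<alpha>) * (LINT t:?A|lborel. ?I b t)"
    using int by simp
  finally show ?thesis
    using assms by (simp add: tail_integral_step)
qed

lemma W0_step: "W0 tb F f (indicator {a..}) = integrated_survival a"
  unfolding W0_eq integrated_survival_def set_lebesgue_integral_def
  by (rule Bochner_Integration.integral_cong) (auto simp: indicator_def)

lemma W0_two_step:
  "W0 tb F f (two_step \<alpha> a b) = \<alpha> * integrated_survival a + (1 - \<alpha>) * integrated_survival b"
proof -
  let ?I = "\<lambda>c t. (1 - F t) * indicator {c..} t"
  have int: "set_integrable lborel \<Theta> (?I c)" for c :: real
    using step_function_properties(5,6)[of 0] by (intro set_integrable_survival_mult) auto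
  have "W0 tb F f (two_step \<alpha> a b) = (LINT t:\<Theta>|lborel. \<alpha> * ?I a t + (1 - \<alpha>) * ?I b t)"
    unfolding W0_eq by (rule set_lebesgue_integral_cong) (auto simp: two_step_def algebra_simps)
  also have "\<dots> = \<alpha> * (LINT t:\<Theta>|lborel. ?I a t) + (1 - \<alpha>) * (LINT t:\<Theta>|lborel. ?I b t)"
    using int by simp
  finally show ?thesis
    by (simp add: W0_step[unfolded W0_eq])
qed

lemma in_MPS_two_step:
  assumes a: "a \<in> \<Theta>" and b: "b \<in> \<Theta>" and m: "m \<in> \<Theta>"
    and \<alpha>: "0 \<le> \<alpha>" "\<alpha> \<le> 1" and balance: "\<alpha> * (1 - F a) + (1 - \<alpha>) * (1 - F b) = 1 - F m"
  shows "in_MPS tb f (two_step \<alpha> a b) (indicator {m..})"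
proof -
  have tails: "(LINT t:{t\<in>\<Theta>. x \<le> t}|lborel. two_step \<alpha> a b t * f t)
                 \<le> (LINT t:{t\<in>\<Theta>. x \<le> t}|lborel. indicator {m..} t * f t)" if "x \<in> \<Theta>" for x
    using convex_comb_min_le[OF \<alpha>, of "1 - F x" "1 - F a" "1 - F b"]
    by (simp add: tail_integral_two_step tail_integral_step survival_max balance that a b m)
  have "\<Theta> = {t\<in>\<Theta>. 0 \<le> t}"
    by (auto simp: Theta_iff)
  moreover have "max 0 a = a" "max 0 b = b" "max 0 m = m"
    using a b m by (auto simp: Theta_iff)
  ultimately have "(LINT t:\<Theta>|lborel. two_step \<alpha> a b t * f t) = (LINT t:\<Theta>|lborel. indicator {m..} t * f t)"
    using tail_integral_two_step[OF zero_in_Theta a b, of \<alpha>] tail_integral_step[OF zero_in_Theta m]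
    by (simp add: balance)
  with tails show ?thesis
    using step_function_properties[OF \<alpha>] by (simp add: in_MPS_def)
qed

lemma chord_ineq_of_W0_antimono:
  assumes hyp: "\<forall>s sh. admissible tb s \<and> admissible tb sh \<and> in_MPS tb f sh s \<longrightarrow> W0 tb F f sh \<le> W0 tb F f s"
    and a: "a \<in> \<Theta>" and b: "b \<in> \<Theta>" and "a < m" "m < b"
  shows "(F b - F m) * (integrated_survival a - integrated_survival m)
           \<le> (F m - F a) * (integrated_survival m - integrated_survival b)"
proof -
  have "0 \<le> a"
    using a by (simp add: Theta_iff)
  then have m: "m \<in> \<Theta>"
    using Icc_subset_Theta[OF _ b, of m] \<open>a < m\<close> \<open>m < b\<close> by auto
  have "F a < F m" "F m < F b"
    using F_strict_mono a b m \<open>a < m\<close> \<open>m < b\<close> by auto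
  define \<alpha> where "\<alpha> = (F b - F m) / (F b - F a)"
  have \<alpha>: "0 \<le> \<alpha>" "\<alpha> \<le> 1" "\<alpha> * (F b - F a) = F b - F m"
    using \<open>F a < F m\<close> \<open>F m < F b\<close> by (auto simp: \<alpha>_def field_simps)
  then have "\<alpha> * (1 - F a) + (1 - \<alpha>) * (1 - F b) = 1 - F m"
    by (simp add: algebra_simps)
  with hyp have "W0 tb F f (two_step \<alpha> a b) \<le> W0 tb F f (indicator {m..})"
    using in_MPS_two_step[OF a b m \<alpha>(1,2)] step_function_properties(1,2)[OF \<alpha>(1,2)] by blast
  then have "\<alpha> * integrated_survival a + (1 - \<alpha>) * integrated_survival b \<le> integrated_survival m"
    by (simp add: W0_two_step W0_step)
  then have "(F b - F a) * (\<alpha> * integrated_survival a + (1 - \<alpha>) * integrated_survival b)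
               \<le> (F b - F a) * integrated_survival m"
    using \<open>F a < F m\<close> \<open>F m < F b\<close> by (intro mult_left_mono) auto
  moreover have "(F b - F a) * (\<alpha> * integrated_survival a + (1 - \<alpha>) * integrated_survival b)
      = (\<alpha> * (F b - F a)) * integrated_survival a + ((F b - F a) - \<alpha> * (F b - F a)) * integrated_survival b"
    by (simp add: algebra_simps)
  ultimately have "(F b - F m) * integrated_survival a + (F m - F a) * integrated_survival b
      \<le> (F b - F a) * integrated_survival m"
    unfolding \<alpha>(3) by simp
  then show ?thesis
    by (simp add: left_diff_distrib right_diff_distrib)
qed

lemma DFR_of_W0_antimono:
  assumes hyp: "\<forall>s sh. admissible tb s \<and> admissible tb sh \<and> in_MPS tb f sh s \<longrightarrow> W0 tb F f sh \<le> W0 tb F f s"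
  shows "DFR tb F f"
  unfolding DFR_def
proof (rule mono_onI)
  fix x y assume xy: "x \<in> ThetaO tb" "y \<in> ThetaO tb" "x \<le> y"
  then have x: "x \<in> \<Theta>" and y: "y \<in> \<Theta>"
    using ThetaO_subset_Theta by auto
  then have "0 \<le> x"
    by (simp add: Theta_iff)
  show "(1 - F x) / f x \<le> (1 - F y) / f y"
  proof (cases "x = y")
    case False
    with xy have "x < y" by simp
    have "{x..y} \<subseteq> \<Theta>"
      using Icc_subset_Theta[OF \<open>0 \<le> x\<close> y] .
    show ?thesis
    proof (rule deriv_ratio_le_of_chord_ineq[where \<phi>="\<lambda>u. - integrated_survival u" and \<psi>=F])
      show "strict_mono_on {x..y} F"
        using \<open>{x..y} \<subseteq> \<Theta>\<close> by (auto intro!: strict_mono_onI F_strict_mono)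
      show "(F y - F m) * (- integrated_survival m - - integrated_survival x)
              \<le> (F m - F x) * (- integrated_survival y - - integrated_survival m)" if "x < m" "m < y" for m
        using chord_ineq_of_W0_antimono[OF hyp x y that] by simp
      show "f x \<noteq> 0" "f y \<noteq> 0"
        using f_pos x y by auto
    qed (use \<open>x < y\<close> \<open>0 \<le> x\<close> y in \<open>auto intro: F_has_real_derivative integrated_survival_has_real_derivative\<close>)
  qed simp
qed

end

theorem mainTheorem14:
  fixes tb :: ereal and F f :: "real \<Rightarrow> real"
  assumes tb_pos: "0 < tb"
    and f_cont: "continuous_on (Theta tb) f"
    and f_pos: "\<forall>x\<in>Theta tb. 0 < f x"
    and f_int: "set_integrable lborel (Theta tb) f"
    and f_total: "(LINT t:Theta tb|lborel. f t) = 1"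
    and F_def: "\<forall>x\<in>Theta tb. F x = (LINT t:{0..x}|lborel. f t)"
    and finite_mean: "set_integrable lborel (Theta tb) (\<lambda>t. t * f t)"
  shows "(IFR tb F f \<longrightarrow>
            (\<forall>s sh. admissible tb s \<and> admissible tb sh \<and> in_MPS tb f sh s
                \<longrightarrow> W0 tb F f sh \<ge> W0 tb F f s))
       \<and> ((\<forall>s sh. admissible tb s \<and> admissible tb sh \<and> in_MPS tb f sh s
                \<longrightarrow> W0 tb F f sh \<le> W0 tb F f s) \<longleftrightarrow> DFR tb F f)"
proof -
  interpret type_distribution tb F f
    using assms by unfold_locales
  show ?thesis
    using W0_le_W0_of_IFR W0_le_W0_of_DFR DFR_of_W0_antimono by blast
qed

end
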